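(* Let $(P,\le,A_1\ldots A_k)$ be a regular poset, let $t\in[3,k]$, and suppose $A_t$ is inserted between two antichains $A_p\sqsubset A_s$ that are consecutive in $(\{A_1,\dots,A_{t-1}\},\sqsubseteq)$ (so that $A_p\sqsubset A_t\sqsubset A_s$ are consecutive in $(\{A_1,\dots,A_t\},\sqsubseteq)$). Then for every node $M$ of $(A_p,A_t,<)$ or of $(A_t,A_s,<)$ there is a unique node $N$ of $(A_p,A_s,<)$ such that $\mathrm{Int}(M)\subset\mathrm{Int}(N)$.
   Context: Let $(P,\le)$ be a finite poset of width $w$. For $A\subseteq P$ let $A{\uparrow}=\{y\in P: x\le y\text{ for some }x\in A\}$ and $A{\downarrow}=\{y\in P: y\le x\text{ for some }x\in A\}$. For maximal antichains $A,B$ write $A\sqsubseteq B$ if $A\subseteq B{\downarrow}$, and $A\sqsubset B$ if also $A\ne B$. For disjoint antichains $A\sqsubset B$, $(A,B,<)$ denotes the bipartite graph with classes $A,B$ and an edge $(a<b)$ for each $a\in A$, $b\in B$ with $a<b$; it is regular if every edge lies in some perfect matching. A regular poset is a triple $(P,\le,A_1\ldots A_k)$ where $A_1,\dots,A_k$ are maximum antichains of $P$ such that: they partition $P$; $(\{A_1,\dots,A_k\},\sqsubseteq)$ is a linear order with minimum $A_1$ and maximum $A_2$; $a<b$ for all $a\in A_1$, $b\in A_2$; and for every $t\in[2,k]$ and every two antichains $A_p\sqsubset A_s$ consecutive in $(\{A_1,\dots,A_t\},\sqsubseteq)$, the bipartite graph $(A_p,A_s,<)$ is regular. For two such consecutive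 antichains $A_p\sqsubset A_s$, a node of $(A_p,A_s,<)$ is a bipartite graph $(X,Y,<)$ with $X\subseteq A_p$, $Y\subseteq A_s$ and $X\cup Y$ the vertex set of a connected component of $(A_p,A_s,<)$. For a node $N=(X,Y,<)$, $\mathrm{Int}(N)=X{\uparrow}\cap Y{\downarrow}$. *)

theory Defs
  imports Main
begin

text \<open>Finite posets are represented as a finite carrier P :: 'a set inside a type
  'a of class order; the order of the poset is the restriction of the type order.\<close>

definition antichain :: "'a::order set \<Rightarrow> bool" where
  "antichain A \<longleftrightarrow> (\<forall>x\<in>A. \<forall>y\<in>A. x \<le> y \<longrightarrow> x = y)"

definition width :: "'a::order set \<Rightarrow> nat" where
  "width P = Max {card A | A. A \<subseteq> P \<and> antichain A}"

definition maximum_antichain :: "'a::order set \<Rightarrow> 'a set \<Rightarrow> bool" where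
  "maximum_antichain P A \<longleftrightarrow> A \<subseteq> P \<and> antichain A \<and> card A = width P"

definition up_set :: "'a::order set \<Rightarrow> 'a set \<Rightarrow> 'a set" where
  "up_set P A = {y\<in>P. \<exists>x\<in>A. x \<le> y}"

definition down_set :: "'a::order set \<Rightarrow> 'a set \<Rightarrow> 'a set" where
  "down_set P A = {y\<in>P. \<exists>x\<in>A. y \<le> x}"

definition ac_le :: "'a::order set \<Rightarrow> 'a set \<Rightarrow> 'a set \<Rightarrow> bool" where
  "ac_le P A B \<longleftrightarrow> A \<subseteq> down_set P B"

definition ac_less :: "'a::order set \<Rightarrow> 'a set \<Rightarrow> 'a set \<Rightarrow> bool" where
  "ac_less P A B \<longleftrightarrow> ac_le P A B \<and> A \<noteq> B"

definition bip_edges :: "'a::order set \<Rightarrow> 'a set \<Rightarrow> ('a \<times> 'a) set" where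
  "bip_edges A B = {(a,b). a \<in> A \<and> b \<in> B \<and> a < b}"

definition perfect_matching :: "'a::order set \<Rightarrow> 'a set \<Rightarrow> ('a \<times> 'a) set \<Rightarrow> bool" where
  "perfect_matching A B M \<longleftrightarrow> M \<subseteq> bip_edges A B
     \<and> (\<forall>a\<in>A. \<exists>!b. (a,b) \<in> M) \<and> (\<forall>b\<in>B. \<exists>!a. (a,b) \<in> M)"

definition regular_bip :: "'a::order set \<Rightarrow> 'a set \<Rightarrow> bool" where
  "regular_bip A B \<longleftrightarrow>
     (\<forall>e\<in>bip_edges A B. \<exists>M. perfect_matching A B M \<and> e \<in> M)"

definition bip_adj :: "'a::order set \<Rightarrow> 'a set \<Rightarrow> 'a \<Rightarrow> 'a \<Rightarrow> bool" where
  "bip_adj A B x y \<longleftrightarrow> (x, y) \<in> bip_edges A B \<or> (y, x) \<in> bip_edges A B"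

definition bip_component :: "'a::order set \<Rightarrow> 'a set \<Rightarrow> 'a \<Rightarrow> 'a set" where
  "bip_component A B v = {u. (bip_adj A B)\<^sup>*\<^sup>* v u}"

definition is_node :: "'a::order set \<Rightarrow> 'a set \<Rightarrow> 'a set \<times> 'a set \<Rightarrow> bool" where
  "is_node A B N \<longleftrightarrow> (case N of (X, Y) \<Rightarrow> X \<subseteq> A \<and> Y \<subseteq> B \<and>
      (\<exists>v\<in>A \<union> B. X \<union> Y = bip_component A B v))"

definition Int_node :: "'a::order set \<Rightarrow> 'a set \<times> 'a set \<Rightarrow> 'a set" where
  "Int_node P N = (case N of (X, Y) \<Rightarrow> up_set P X \<inter> down_set P Y)"

definition consecutive :: "'a::order set \<Rightarrow> (nat \<Rightarrow> 'a set) \<Rightarrow> nat \<Rightarrow> nat \<Rightarrow> nat \<Rightarrow> bool" where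
  "consecutive P A t p s \<longleftrightarrow> p \<in> {1..t} \<and> s \<in> {1..t} \<and> ac_less P (A p) (A s) \<and>
     \<not> (\<exists>q\<in>{1..t}. ac_less P (A p) (A q) \<and> ac_less P (A q) (A s))"

definition regular_poset :: "'a::order set \<Rightarrow> (nat \<Rightarrow> 'a set) \<Rightarrow> nat \<Rightarrow> bool" where
  "regular_poset P A k \<longleftrightarrow>
     finite P \<and>
     (\<forall>i\<in>{1..k}. maximum_antichain P (A i)) \<and>
     \<comment> \<open>partition of P\<close>
     (\<forall>i\<in>{1..k}. A i \<noteq> {}) \<and>
     (\<forall>i\<in>{1..k}. \<forall>j\<in>{1..k}. i \<noteq> j \<longrightarrow> A i \<inter> A j = {}) \<and>
     (\<Union>i\<in>{1..k}. A i) = P \<and>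
     \<comment> \<open>linear order under \<sqsubseteq> with minimum A_1 and maximum A_2\<close>
     1 \<le> k \<and> 2 \<le> k \<and>
     (\<forall>i\<in>{1..k}. \<forall>j\<in>{1..k}. ac_le P (A i) (A j) \<or> ac_le P (A j) (A i)) \<and>
     (\<forall>i\<in>{1..k}. ac_le P (A 1) (A i) \<and> ac_le P (A i) (A 2)) \<and>
     (\<forall>a\<in>A 1. \<forall>b\<in>A 2. a < b) \<and>
     (\<forall>t\<in>{2..k}. \<forall>p s. consecutive P A t p s \<longrightarrow> regular_bip (A p) (A s))"

end

theory Submission
  imports Defs "HOL-Library.Dual_Ordered_Lattice"
begin

text \<open>Because A_p and A_t are maximum antichains with A_p \<sqsubset> A_t \<sqsubset> A_s, the
  graphs (A_p, A_t, <) and (A_t, A_s, <) have no isolated vertices. A path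
  l < t > l' in (A_p, A_t, <) shortcuts to l < u > l' in (A_p, A_s, <) through any
  u \<in> A_s above t, so a node M of (A_p, A_t, <) lies inside one node N of
  (A_p, A_s, <) and Int(M) \<subseteq> Int(N); the inclusion is strict because the elements
  of A_s above M lie in Int(N) but not below A_t. Every lower vertex x of M lies in
  Int(M), and since A_p is an antichain, x \<in> Int(N') forces x \<in> N', which makes
  N unique. Nodes of (A_t, A_s, <) are handled by order duality.\<close>

definition bip_no_isolated :: "'a::order set \<Rightarrow> 'a set \<Rightarrow> bool" where
  "bip_no_isolated A B \<longleftrightarrow> (\<forall>a\<in>A. \<exists>b\<in>B. a < b) \<and> (\<forall>b\<in>B. \<exists>a\<in>A. a < b)"

definition node_of :: "'a::order set \<Rightarrow> 'a set \<Rightarrow> 'a \<Rightarrow> 'a set \<times> 'a set" where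
  "node_of A B x = (bip_component A B x \<inter> A, bip_component A B x \<inter> B)"

lemma bip_no_isolated_trans:
  "bip_no_isolated A B \<Longrightarrow> bip_no_isolated B C \<Longrightarrow> bip_no_isolated A C"
  unfolding bip_no_isolated_def by (meson less_trans)

lemma bip_no_isolated_disjoint:
  assumes "antichain B" "bip_no_isolated A B"
  shows "A \<inter> B = {}"
  using assms unfolding antichain_def bip_no_isolated_def by (fastforce simp: less_le)

lemma bip_adj_sym: "bip_adj A B x y = bip_adj A B y x"
  by (auto simp: bip_adj_def)

lemma bip_component_self: "x \<in> bip_component A B x"
  by (simp add: bip_component_def)

lemma bip_component_step:
  "u \<in> bip_component A B v \<Longrightarrow> bip_adj A B u w \<Longrightarrow> w \<in> bip_component A B v"
  by (auto simp: bip_component_def)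

lemma bip_component_eq:
  assumes "u \<in> bip_component A B v"
  shows "bip_component A B u = bip_component A B v"
proof -
  have "symp (bip_adj A B)\<^sup>*\<^sup>*"
    by (rule symp_rtranclp) (auto intro: sympI simp: bip_adj_sym)
  with assms show ?thesis
    unfolding bip_component_def by (auto dest: sympD intro: rtranclp_trans)
qed

lemma bip_component_subset:
  assumes "v \<in> A \<union> B"
  shows "bip_component A B v \<subseteq> A \<union> B"
proof
  fix u assume "u \<in> bip_component A B v"
  then have "(bip_adj A B)\<^sup>*\<^sup>* v u" by (simp add: bip_component_def)
  then show "u \<in> A \<union> B" using assms
    by (induction rule: rtranclp_induct) (auto simp: bip_adj_def bip_edges_def)
qed

lemma is_node_iff_node_of:
  assumes "A \<inter> B = {}" "bip_no_isolated A B"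
  shows "is_node A B N \<longleftrightarrow> (\<exists>x\<in>A. N = node_of A B x)"
proof
  assume "is_node A B N"
  then obtain X Y v where N: "N = (X, Y)" "X \<subseteq> A" "Y \<subseteq> B" "v \<in> A \<union> B"
    and comp: "X \<union> Y = bip_component A B v"
    unfolding is_node_def by auto
  obtain x where x: "x \<in> A" "x \<in> bip_component A B v"
  proof (cases "v \<in> A")
    case False
    with N(4) assms(2) obtain x where "x \<in> A" "x < v" "v \<in> B"
      unfolding bip_no_isolated_def by blast
    then show ?thesis
      by (intro that[of x]) (auto intro: bip_component_step[OF bip_component_self]
          simp: bip_adj_def bip_edges_def)
  qed (auto intro: bip_component_self)
  have "X = bip_component A B x \<inter> A" "Y = bip_component A B x \<inter> B"
    using N(2,3) comp assms(1) bip_component_eq[OF x(2)] by blast+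
  with x(1) N(1) show "\<exists>x\<in>A. N = node_of A B x"
    unfolding node_of_def by blast
next
  assume "\<exists>x\<in>A. N = node_of A B x"
  then show "is_node A B N"
    unfolding is_node_def node_of_def using bip_component_subset by blast
qed

lemma node_of_eq:
  "y \<in> bip_component A B x \<Longrightarrow> node_of A B y = node_of A B x"
  by (simp add: node_of_def bip_component_eq)

lemma bip_component_edge:
  "a \<in> A \<Longrightarrow> b \<in> B \<Longrightarrow> a < b \<Longrightarrow> b \<in> bip_component A B a"
  by (auto intro: bip_component_step[OF bip_component_self] simp: bip_adj_def bip_edges_def)

lemma edge_mem_Int_node_of:
  assumes "a \<in> A" "b \<in> B" "a < b"
  shows "{a, b} \<inter> P \<subseteq> Int_node P (node_of A B a)"
  using assms bip_component_self[of a A B] bip_component_edge[OF assms]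
  unfolding Int_node_def node_of_def up_set_def down_set_def by (auto intro: less_imp_le)

lemma bip_component_shortcut:
  assumes "L \<inter> T = {}" "\<forall>t\<in>T. \<exists>u\<in>U. t < u" "x \<in> L" "w \<in> bip_component L T x"
  shows "(w \<in> L \<longrightarrow> w \<in> bip_component L U x)
    \<and> (w \<in> T \<longrightarrow> (\<forall>u\<in>U. w < u \<longrightarrow> u \<in> bip_component L U x))"
proof -
  have "(bip_adj L T)\<^sup>*\<^sup>* x w" using assms(4) by (simp add: bip_component_def)
  then show ?thesis
  proof (induction rule: rtranclp_induct)
    case base
    then show ?case using assms(1,3) bip_component_self by blast
  next
    case (step w w')
    then consider "w \<in> L" "w' \<in> T" "w < w'" | "w' \<in> L" "w \<in> T" "w' < w"
      by (auto simp: bip_adj_def bip_edges_def)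
    then show ?case
    proof cases
      case 1
      then have "bip_adj L U w u" if "u \<in> U" "w' < u" for u
        using that by (auto simp: bip_adj_def bip_edges_def intro: less_trans)
      with 1 step.IH assms(1) show ?thesis by (blast intro: bip_component_step)
    next
      case 2
      then obtain u where "u \<in> U" "w < u" using assms(2) by blast
      with 2 have "bip_adj L U u w'" by (auto simp: bip_adj_def bip_edges_def intro: less_trans)
      with 2 step.IH \<open>u \<in> U\<close> \<open>w < u\<close> assms(1) show ?thesis by (blast intro: bip_component_step)
    qed
  qed
qed

lemma antichain_mem_up_set_iff:
  assumes "antichain L" "X \<subseteq> L" "x \<in> L"
  shows "x \<in> up_set P X \<longleftrightarrow> x \<in> P \<and> x \<in> X"
  using assms unfolding antichain_def up_set_def by blast

lemma node_of_eq_if_mem_Int_node: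
  assumes "antichain A" "x \<in> A" "x \<in> Int_node P (node_of A B y)"
  shows "node_of A B y = node_of A B x"
proof -
  have "x \<in> up_set P (bip_component A B y \<inter> A)"
    using assms(3) unfolding Int_node_def node_of_def by simp
  then have "x \<in> bip_component A B y"
    using antichain_mem_up_set_iff[OF assms(1) Int_lower2 assms(2)] by blast
  then show ?thesis by (rule node_of_eq[symmetric])
qed

lemma antichain_disjoint_down_set:
  assumes "antichain U" "\<forall>t\<in>T. \<exists>u\<in>U. t < u"
  shows "U \<inter> down_set P T = {}"
proof -
  have "u \<notin> down_set P T" if "u \<in> U" for u
  proof
    assume "u \<in> down_set P T"
    then obtain t where "t \<in> T" "u \<le> t" unfolding down_set_def by blast
    moreover obtain u' where "u' \<in> U" "t < u'" using assms(2) \<open>t \<in> T\<close> by blast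
    ultimately have "u < u'" by (blast intro: le_less_trans)
    with \<open>u \<in> U\<close> \<open>u' \<in> U\<close> assms(1) show False unfolding antichain_def by (auto simp: less_le)
  qed
  then show ?thesis by blast
qed

lemma Int_node_of_lower_subset:
  assumes "L \<inter> T = {}" "\<forall>t\<in>T. \<exists>u\<in>U. t < u" "x \<in> L"
  shows "Int_node P (node_of L T x) \<subseteq> Int_node P (node_of L U x)"
proof
  fix z assume "z \<in> Int_node P (node_of L T x)"
  then obtain l t where z: "z \<in> P" "l \<le> z" "z \<le> t" "l \<in> L" "t \<in> T"
    and comp: "l \<in> bip_component L T x" "t \<in> bip_component L T x"
    unfolding Int_node_def node_of_def up_set_def down_set_def by auto
  obtain u where u: "u \<in> U" "t < u" using assms(2) z(5) by blast
  have "l \<in> bip_component L U x" "u \<in> bip_component L U x"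
    using bip_component_shortcut[OF assms, of l] bip_component_shortcut[OF assms, of t]
      comp z u by blast+
  with z u show "z \<in> Int_node P (node_of L U x)"
    unfolding Int_node_def node_of_def up_set_def down_set_def
    by (auto intro: order.trans less_imp_le)
qed

lemma node_lower_extends_uniquely:
  fixes P L T U :: "'a::order set"
  assumes "antichain L" "antichain T" "antichain U" "L \<subseteq> P" "U \<subseteq> P"
    and LT: "bip_no_isolated L T" and TU: "bip_no_isolated T U"
    and "is_node L T M"
  shows "\<exists>!N. is_node L U N \<and> Int_node P M \<subset> Int_node P N"
proof -
  have LU: "bip_no_isolated L U" using LT TU by (rule bip_no_isolated_trans)
  have disj: "L \<inter> T = {}" "L \<inter> U = {}"
    using assms(2,3) LT LU by (auto dest: bip_no_isolated_disjoint)
  have TU_up: "\<forall>t\<in>T. \<exists>u\<in>U. t < u" using TU unfolding bip_no_isolated_def by blast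
  obtain x where x: "x \<in> L" and M: "M = node_of L T x"
    using assms(8) is_node_iff_node_of[OF disj(1) LT] by blast
  define N where "N = node_of L U x"
  have nodes: "is_node L U N' \<longleftrightarrow> (\<exists>y\<in>L. N' = node_of L U y)" for N'
    using is_node_iff_node_of[OF disj(2) LU] .
  obtain u where u: "u \<in> U" "x < u" using LU x unfolding bip_no_isolated_def by blast
  have "u \<in> Int_node P N"
    using edge_mem_Int_node_of[OF x u(1,2), of P] u(1) assms(5) unfolding N_def by blast
  moreover have "u \<notin> Int_node P M"
    using antichain_disjoint_down_set[OF assms(3) TU_up, of P] u(1)
    unfolding M Int_node_def node_of_def down_set_def by blast
  ultimately have strict: "Int_node P M \<subset> Int_node P N"
    using Int_node_of_lower_subset[OF disj(1) TU_up x] unfolding M N_def by blast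
  obtain t where t: "t \<in> T" "x < t" using LT x unfolding bip_no_isolated_def by blast
  have x_in_M: "x \<in> Int_node P M"
    using edge_mem_Int_node_of[OF x t, of P] x assms(4) unfolding M by blast
  have unique: "N' = N" if "is_node L U N'" "Int_node P M \<subseteq> Int_node P N'" for N'
    using that x_in_M node_of_eq_if_mem_Int_node[OF assms(1) x]
    unfolding nodes N_def by blast
  have "is_node L U N" unfolding nodes N_def using x by blast
  with strict unique show ?thesis by (intro ex1I[of _ N]) blast+
qed

lemma bij_Ex1_iff: "bij f \<Longrightarrow> (\<exists>!x. Q (f x)) \<longleftrightarrow> (\<exists>!y. Q y)"
  unfolding bij_def inj_def surj_def by metis

lemma antichain_dual_image_iff: "antichain (dual ` A) \<longleftrightarrow> antichain A"
  unfolding antichain_def by auto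

lemma bip_no_isolated_dual_image_iff:
  "bip_no_isolated (dual ` B) (dual ` A) \<longleftrightarrow> bip_no_isolated A B"
  unfolding bip_no_isolated_def by auto

lemma bip_adj_dual_iff:
  "bip_adj (dual ` B) (dual ` A) x y \<longleftrightarrow> bip_adj A B (undual x) (undual y)"
  unfolding bip_adj_def bip_edges_def by (cases x; cases y) auto

lemma bip_component_dual:
  "bip_component (dual ` B) (dual ` A) (dual v) = dual ` bip_component A B v"
proof
  show "bip_component (dual ` B) (dual ` A) (dual v) \<subseteq> dual ` bip_component A B v"
  proof
    fix u assume "u \<in> bip_component (dual ` B) (dual ` A) (dual v)"
    then have "(bip_adj (dual ` B) (dual ` A))\<^sup>*\<^sup>* (dual v) u"
      by (simp add: bip_component_def)
    then have "undual u \<in> bip_component A B v"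
      by (induction rule: rtranclp_induct)
        (auto simp: bip_adj_dual_iff intro: bip_component_self bip_component_step)
    then show "u \<in> dual ` bip_component A B v" by (metis dual_undual image_eqI)
  qed
next
  show "dual ` bip_component A B v \<subseteq> bip_component (dual ` B) (dual ` A) (dual v)"
  proof clarify
    fix u assume "u \<in> bip_component A B v"
    then have "(bip_adj A B)\<^sup>*\<^sup>* v u" by (simp add: bip_component_def)
    then show "dual u \<in> bip_component (dual ` B) (dual ` A) (dual v)"
      by (induction rule: rtranclp_induct)
        (auto simp: bip_adj_dual_iff intro: bip_component_self bip_component_step)
  qed
qed

text \<open>Reversing the order exchanges the lower and upper class of a node.\<close>
definition dual_node :: "'a set \<times> 'a set \<Rightarrow> 'a dual set \<times> 'a dual set" where
  "dual_node N = (dual ` snd N, dual ` fst N)"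

lemma bij_dual_node: "bij dual_node"
  by (rule bij_betw_byWitness[where f' = "\<lambda>N. (undual ` snd N, undual ` fst N)"])
    (auto simp: dual_node_def image_comp)

lemma is_node_dual_node_iff:
  "is_node (dual ` B) (dual ` A) (dual_node N) \<longleftrightarrow> is_node A B N"
proof -
  obtain X Y where N: "N = (X, Y)" by (cases N)
  have "dual ` Y \<union> dual ` X = bip_component (dual ` B) (dual ` A) (dual v)
    \<longleftrightarrow> X \<union> Y = bip_component A B v" for v
    by (simp add: bip_component_dual inj_image_eq_iff[OF inj_dual] Un_commute flip: image_Un)
  then have "(\<exists>v\<in>dual ` B \<union> dual ` A. dual ` Y \<union> dual ` X = bip_component (dual ` B) (dual ` A) v)
    \<longleftrightarrow> (\<exists>v\<in>A \<union> B. X \<union> Y = bip_component A B v)"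
    by (auto simp flip: image_Un)
  then show ?thesis
    unfolding is_node_def dual_node_def N by (auto simp: inj_image_subset_iff[OF inj_dual])
qed

lemma up_set_dual_image: "up_set (dual ` P) (dual ` A) = dual ` down_set P A"
  unfolding up_set_def down_set_def by auto

lemma down_set_dual_image: "down_set (dual ` P) (dual ` A) = dual ` up_set P A"
  unfolding up_set_def down_set_def by auto

lemma Int_node_dual_node: "Int_node (dual ` P) (dual_node N) = dual ` Int_node P N"
  by (cases N) (simp add: Int_node_def dual_node_def up_set_dual_image down_set_dual_image
      image_Int[OF inj_dual] Int_commute)

lemma node_upper_extends_uniquely:
  fixes P L T U :: "'a::order set"
  assumes "antichain L" "antichain T" "antichain U" "L \<subseteq> P" "U \<subseteq> P"
    and "bip_no_isolated L T" "bip_no_isolated T U"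
    and "is_node T U M"
  shows "\<exists>!N. is_node L U N \<and> Int_node P M \<subset> Int_node P N"
proof -
  have "\<exists>!N'. is_node (dual ` U) (dual ` L) N'
      \<and> Int_node (dual ` P) (dual_node M) \<subset> Int_node (dual ` P) N'"
    using assms by (intro node_lower_extends_uniquely[where T = "dual ` T"])
      (auto simp: antichain_dual_image_iff bip_no_isolated_dual_image_iff is_node_dual_node_iff)
  then show ?thesis
    unfolding bij_Ex1_iff[OF bij_dual_node, symmetric]
    by (simp add: is_node_dual_node_iff Int_node_dual_node inj_image_subset_iff[OF inj_dual]
        inj_image_eq_iff[OF inj_dual] less_le)
qed

lemma maximum_antichain_comparable:
  assumes "finite P" "maximum_antichain P A" "z \<in> P"
  shows "\<exists>a\<in>A. a \<le> z \<or> z \<le> a"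
proof (rule ccontr)
  assume incomparable: "\<not> (\<exists>a\<in>A. a \<le> z \<or> z \<le> a)"
  have A: "A \<subseteq> P" "antichain A" "card A = width P"
    using assms(2) unfolding maximum_antichain_def by auto
  have "finite {card B | B. B \<subseteq> P \<and> antichain B}"
    using assms(1) by (auto intro: finite_subset[where B = "card ` Pow P"])
  moreover have "insert z A \<subseteq> P" "antichain (insert z A)"
    using A(1,2) assms(3) incomparable unfolding antichain_def by auto
  ultimately have "card (insert z A) \<le> width P"
    unfolding width_def by (auto intro!: Max_ge)
  moreover have "finite A" using A(1) assms(1) by (rule finite_subset)
  ultimately show False using A(3) incomparable by auto
qed

lemma bip_no_isolated_if_ac_le:
  assumes "finite P" "maximum_antichain P A" "antichain B" "B \<subseteq> P" "ac_le P A B"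
    and "A \<inter> B = {}"
  shows "bip_no_isolated A B"
  unfolding bip_no_isolated_def
proof
  show "\<forall>a\<in>A. \<exists>b\<in>B. a < b"
    using assms(5,6) unfolding ac_le_def down_set_def by (fastforce simp: less_le)
  show "\<forall>b\<in>B. \<exists>a\<in>A. a < b"
  proof
    fix b assume "b \<in> B"
    then obtain a where a: "a \<in> A" "a \<le> b \<or> b \<le> a"
      using maximum_antichain_comparable[OF assms(1,2)] assms(4) by blast
    moreover have "a \<noteq> b" using a(1) \<open>b \<in> B\<close> assms(6) by blast
    moreover have "\<not> b < a"
    proof
      assume "b < a"
      obtain b' where "b' \<in> B" "a \<le> b'"
        using a(1) assms(5) unfolding ac_le_def down_set_def by blast
      with \<open>b < a\<close> \<open>b \<in> B\<close> assms(3) show False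
        unfolding antichain_def by (metis less_le_not_le order_trans)
    qed
    ultimately show "\<exists>a\<in>A. a < b" by (auto simp: less_le)
  qed
qed

theorem proposition9:
  fixes P :: "'a::order set" and A :: "nat \<Rightarrow> 'a set" and k t p s :: nat
  assumes "regular_poset P A k"
    and "t \<in> {3..k}"
    and "consecutive P A (t - 1) p s"
    and "ac_less P (A p) (A t)" and "ac_less P (A t) (A s)"
    and "is_node (A p) (A t) M \<or> is_node (A t) (A s) M"
  shows "\<exists>!N. is_node (A p) (A s) N \<and> Int_node P M \<subset> Int_node P N"
proof -
  have idx: "p \<in> {1..k}" "s \<in> {1..k}" "p \<noteq> t" "t \<noteq> s"
    using assms(2-5) unfolding consecutive_def ac_less_def by auto
  have fin: "finite P" and disj: "A p \<inter> A t = {}" "A t \<inter> A s = {}"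
    using assms(1,2) idx unfolding regular_poset_def by auto
  have max: "maximum_antichain P (A p)" "maximum_antichain P (A t)" "maximum_antichain P (A s)"
    using assms(1,2) idx unfolding regular_poset_def by auto
  then have ac: "antichain (A p)" "antichain (A t)" "antichain (A s)"
    and sub: "A p \<subseteq> P" "A t \<subseteq> P" "A s \<subseteq> P"
    unfolding maximum_antichain_def by auto
  have le: "ac_le P (A p) (A t)" "ac_le P (A t) (A s)"
    using assms(4,5) unfolding ac_less_def by auto
  have pt: "bip_no_isolated (A p) (A t)"
    using fin max(1) ac(2) sub(2) le(1) disj(1) by (rule bip_no_isolated_if_ac_le)
  have ts: "bip_no_isolated (A t) (A s)"
    using fin max(2) ac(3) sub(3) le(2) disj(2) by (rule bip_no_isolated_if_ac_le)
  from assms(6) show ?thesis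
  proof
    assume "is_node (A p) (A t) M"
    with ac sub(1,3) pt ts show ?thesis by (rule node_lower_extends_uniquely)
  next
    assume "is_node (A t) (A s) M"
    with ac sub(1,3) pt ts show ?thesis by (rule node_upper_extends_uniquely)
  qed
qed

end
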